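(* For $n\ge2$ and $i\ge1$ there are isomorphisms of $S_{n-1}$-representations $$\widehat{\mathrm{Lie}}^i_n\big\downarrow\ \cong\ \Big(\widehat{\mathrm{Lie}}^{i-1}_{n-1}\big\downarrow\ \oplus\ \widehat{\mathrm{Lie}}^{i-1}_{n-2}\Big)\big\uparrow,\qquad \widehat W^i_n\big\downarrow\ \cong\ \Big(\widehat W^{i-1}_{n-1}\big\downarrow\ \oplus\ \widehat W^{i-1}_{n-2}\Big)\big\uparrow,$$ where for an $S_m$-representation, $\downarrow$ denotes restriction to $S_{m-1}$ and $\uparrow$ denotes induction to $S_{m+1}$.
   Context: Let $C_n\subset S_n$ be generated by an $n$-cycle $c$, $\chi_\zeta$ a linear character of $C_n$ sending $c$ to a primitive $n$-th root of unity, $\mathrm{Lie}_{(n)}=\chi_\zeta\uparrow_{C_n}^{S_n}$, $\ell_n=\mathrm{ch}(\mathrm{Lie}_{(n)})$ (Frobenius characteristic), $\pi_n=\omega(\ell_n)$. For $\lambda=1^{m_1}2^{m_2}\cdots$ define $S_{|\lambda|}$-characters by $\mathrm{ch}(\mathrm{Lie}_\lambda)=\prod_j h_{m_j}[\ell_j]$ and $\mathrm{ch}(W_\lambda)=\prod_{j\text{ odd}}h_{m_j}[\pi_j]\prod_{j\text{ even}}e_{m_j}[\pi_j]$ (plethysm); $\mathrm{rank}(\lambda)=|\lambda|-\ell(\lambda)$. For $m,i\ge0$, $\widehat{\mathrm{Lie}}^i_m=\bigoplus_\lambda\mathrm{Lie}_\lambda$ and $\widehat W^i_m=\bigoplus_\lambda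 W_\lambda$, sums over partitions $\lambda$ of $m$ having no part equal to $1$ and rank $i$ (so $\widehat{\mathrm{Lie}}^0_0=\widehat W^0_0=\mathbf 1_{S_0}$, and $\widehat{\mathrm{Lie}}^i_1=\widehat W^i_1=0$). *)

theory Defs
  imports Complex_Main "HOL-Library.Poly_Mapping" "HOL-Library.Multiset"
    "HOL-Combinatorics.Permutations"
begin

text \<open>A (complex) representation is identified
with its character: a function on permutations, zero off the group.\<close>

definition perms :: "nat \<Rightarrow> (nat \<Rightarrow> nat) set" where
  "perms m = {\<sigma>. \<sigma> permutes {..<m}}"

definition induce_char ::
  "(nat \<Rightarrow> nat) set \<Rightarrow> (nat \<Rightarrow> nat) set \<Rightarrow> ((nat \<Rightarrow> nat) \<Rightarrow> complex) \<Rightarrow> (nat \<Rightarrow> nat) \<Rightarrow> complex" where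
  "induce_char G H \<psi> \<sigma> =
     (if \<sigma> \<in> G then
        (\<Sum>g\<in>G. if inv g \<circ> \<sigma> \<circ> g \<in> H then \<psi> (inv g \<circ> \<sigma> \<circ> g) else 0) / of_nat (card H)
      else 0)"

definition res :: "nat \<Rightarrow> ((nat \<Rightarrow> nat) \<Rightarrow> complex) \<Rightarrow> (nat \<Rightarrow> nat) \<Rightarrow> complex" where
  "res m \<chi> \<sigma> = (if \<sigma> \<in> perms (m - 1) then \<chi> \<sigma> else 0)"

definition ind :: "nat \<Rightarrow> ((nat \<Rightarrow> nat) \<Rightarrow> complex) \<Rightarrow> (nat \<Rightarrow> nat) \<Rightarrow> complex" where
  "ind m \<chi> = induce_char (perms (Suc m)) (perms m) \<chi>"

definition cyc_orbit :: "(nat \<Rightarrow> nat) \<Rightarrow> nat \<Rightarrow> nat set" where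
  "cyc_orbit \<sigma> x = {(\<sigma> ^^ k) x | k. True}"

definition cycle_type :: "nat \<Rightarrow> (nat \<Rightarrow> nat) \<Rightarrow> nat multiset" where
  "cycle_type m \<sigma> = image_mset card (mset_set {cyc_orbit \<sigma> x | x. x < m})"

text \<open>The ring of symmetric functions over C is the polynomial ring
C[p_1,p_2,...]; an element is a finitely supported map from partitions
(multisets of positive parts) lambda to the coefficient of p_lambda.\<close>

type_synonym symf = "nat multiset \<Rightarrow>\<^sub>0 complex"

definition pw :: "nat multiset \<Rightarrow> symf" where
  "pw la = Poly_Mapping.single la 1"

definition sconst :: "complex \<Rightarrow> symf" where
  "sconst c = Poly_Mapping.single {#} c"

definition partitions :: "nat \<Rightarrow> nat multiset set" where
  "partitions m = {la. sum_mset la = m \<and> 0 \<notin># la}"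

definition zee :: "nat multiset \<Rightarrow> nat" where
  "zee la = (\<Prod>j\<in>set_mset la. j ^ count la j * fact (count la j))"

definition frob :: "nat \<Rightarrow> ((nat \<Rightarrow> nat) \<Rightarrow> complex) \<Rightarrow> symf" where
  "frob m \<chi> = (\<Sum>\<sigma>\<in>perms m. sconst (\<chi> \<sigma> / of_nat (fact m)) * pw (cycle_type m \<sigma>))"

text \<open>The S_m-character whose Frobenius characteristic is F:
chi_F(sigma) = z_mu * [p_mu]F with mu the cycle type of sigma.\<close>
definition char_of :: "nat \<Rightarrow> symf \<Rightarrow> (nat \<Rightarrow> nat) \<Rightarrow> complex" where
  "char_of m F \<sigma> = (if \<sigma> \<in> perms m
      then of_nat (zee (cycle_type m \<sigma>)) * Poly_Mapping.lookup F (cycle_type m \<sigma>) else 0)"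

definition hsym :: "nat \<Rightarrow> symf" where
  "hsym m = frob m (\<lambda>\<sigma>. 1)"

definition esym :: "nat \<Rightarrow> symf" where
  "esym m = frob m (\<lambda>\<sigma>. of_int (sign \<sigma>))"

definition omega :: "symf \<Rightarrow> symf" where
  "omega F = (\<Sum>\<mu>\<in>Poly_Mapping.keys F. Poly_Mapping.single \<mu>
      ((-1) ^ (sum_mset \<mu> - size \<mu>) * Poly_Mapping.lookup F \<mu>))"

definition adams :: "nat \<Rightarrow> symf \<Rightarrow> symf" where
  "adams k g = (\<Sum>\<mu>\<in>Poly_Mapping.keys g. Poly_Mapping.single (image_mset ((*) k) \<mu>) (Poly_Mapping.lookup g \<mu>))"

definition pleth :: "symf \<Rightarrow> symf \<Rightarrow> symf" where
  "pleth f g = (\<Sum>la\<in>Poly_Mapping.keys f. sconst (Poly_Mapping.lookup f la) * prod_mset (image_mset (\<lambda>i. adams i g) la))"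

definition ncycle :: "nat \<Rightarrow> nat \<Rightarrow> nat" where
  "ncycle n x = (if x < n then Suc x mod n else x)"

definition Cn :: "nat \<Rightarrow> (nat \<Rightarrow> nat) set" where
  "Cn n = {ncycle n ^^ k | k. k < n}"

definition chi_zeta :: "nat \<Rightarrow> (nat \<Rightarrow> nat) \<Rightarrow> complex" where
  "chi_zeta n \<tau> = cis (2 * pi / real n) ^ (THE k. k < n \<and> \<tau> = ncycle n ^^ k)"

definition Lie_char :: "nat \<Rightarrow> (nat \<Rightarrow> nat) \<Rightarrow> complex" where
  "Lie_char n = induce_char (perms n) (Cn n) (chi_zeta n)"

definition ell :: "nat \<Rightarrow> symf" where
  "ell n = frob n (Lie_char n)"

definition piL :: "nat \<Rightarrow> symf" where
  "piL n = omega (ell n)"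

definition ch_Lie :: "nat multiset \<Rightarrow> symf" where
  "ch_Lie la = (\<Prod>j\<in>set_mset la. pleth (hsym (count la j)) (ell j))"

definition ch_W :: "nat multiset \<Rightarrow> symf" where
  "ch_W la = (\<Prod>j\<in>set_mset la.
      if odd j then pleth (hsym (count la j)) (piL j)
      else pleth (esym (count la j)) (piL j))"

definition rank :: "nat multiset \<Rightarrow> nat" where
  "rank la = sum_mset la - size la"

definition hat_parts :: "nat \<Rightarrow> nat \<Rightarrow> nat multiset set" where
  "hat_parts i m = {la\<in>partitions m. 1 \<notin># la \<and> rank la = i}"

definition LieHat :: "nat \<Rightarrow> nat \<Rightarrow> (nat \<Rightarrow> nat) \<Rightarrow> complex" where
  "LieHat i m = char_of m (\<Sum>la\<in>hat_parts i m. ch_Lie la)"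

definition WHat :: "nat \<Rightarrow> nat \<Rightarrow> (nat \<Rightarrow> nat) \<Rightarrow> complex" where
  "WHat i m = char_of m (\<Sum>la\<in>hat_parts i m. ch_W la)"

end

theory Submission
  imports Defs
begin

text \<open>Under the Frobenius characteristic, restriction from S_m to S_(m-1) becomes the
derivation d = d/dp_1, and induction from S_m to S_(m+1) becomes multiplication by p_1.
The derivation obeys a chain rule for plethysm, d(f[g]) = (d f)[g] * d g, because p_k[g]
contains no p_1 for k >= 2; it commutes with omega, lowers h_m and e_m to h_(m-1) and e_(m-1),
and sends ell_(k+1) and pi_(k+1) to p_1^k, as Lie_(k+1) restricts to the regular
representation of S_k. Hence d applied to the characteristic attached to a partition lambda is
the sum, over the distinct parts j of lambda, of p_1^(j-1) times the characteristic attached to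
lambda with one part j removed. Summing over the partitions of n of rank i without parts 1
gives d S(i,n) = sum_j p_1^(j-1) S(i+1-j, n-j); separating the term j = 2 from the others
yields d S(i,n) = p_1 (d S(i-1,n-1) + S(i-1,n-2)), which is the theorem read through the
characteristic.\<close>

section \<open>Symmetric functions and the derivation d/dp_1\<close>

lemma sconst_0 [simp]: "sconst 0 = 0"
  by (simp add: sconst_def)

lemma sconst_1 [simp]: "sconst 1 = 1"
  by (simp add: sconst_def)

lemma sconst_mult: "sconst a * sconst b = sconst (a * b)"
  by (simp add: sconst_def mult_single)

lemma sconst_add: "sconst (a + b) = sconst a + sconst b"
  by (simp add: sconst_def single_add)

lemma sconst_of_nat: "sconst (of_nat n) = of_nat n"
  by (simp add: sconst_def)

lemma sconst_mult_single: "sconst a * Poly_Mapping.single k b = Poly_Mapping.single k (a * b)"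
  by (simp add: sconst_def mult_single)

lemma sconst_mult_pw: "sconst a * pw k = Poly_Mapping.single k a"
  by (simp add: pw_def sconst_mult_single)

lemma pw_empty [simp]: "pw {#} = 1"
  by (simp add: pw_def)

lemma pw_mult: "pw a * pw b = pw (a + b)"
  by (simp add: pw_def mult_single)

lemma pw_mult_single: "pw a * Poly_Mapping.single b v = Poly_Mapping.single (a + b) v"
  by (simp add: pw_def mult_single)

definition lin_ext :: "(nat multiset \<Rightarrow> symf) \<Rightarrow> symf \<Rightarrow> symf" where
  "lin_ext Q F = (\<Sum>\<mu>\<in>Poly_Mapping.keys F. sconst (Poly_Mapping.lookup F \<mu>) * Q \<mu>)"

lemma lin_ext_superset:
  assumes "finite A" "Poly_Mapping.keys F \<subseteq> A"
  shows "lin_ext Q F = (\<Sum>\<mu>\<in>A. sconst (Poly_Mapping.lookup F \<mu>) * Q \<mu>)"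
  unfolding lin_ext_def
  by (rule sum.mono_neutral_left) (use assms in \<open>auto simp: in_keys_iff\<close>)

lemma lin_ext_add: "lin_ext Q (F + G) = lin_ext Q F + lin_ext Q G"
proof -
  let ?A = "Poly_Mapping.keys F \<union> Poly_Mapping.keys G"
  have "lin_ext Q (F + G) = (\<Sum>\<mu>\<in>?A. sconst (Poly_Mapping.lookup (F + G) \<mu>) * Q \<mu>)"
    by (rule lin_ext_superset) (use keys_add[of F G] in auto)
  also have "\<dots> = (\<Sum>\<mu>\<in>?A. sconst (Poly_Mapping.lookup F \<mu>) * Q \<mu>)
      + (\<Sum>\<mu>\<in>?A. sconst (Poly_Mapping.lookup G \<mu>) * Q \<mu>)"
    by (simp add: lookup_add sconst_add distrib_right sum.distrib)
  also have "\<dots> = lin_ext Q F + lin_ext Q G"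
    by (subst (1 2) lin_ext_superset[of ?A]) auto
  finally show ?thesis .
qed

lemma lin_ext_zero [simp]: "lin_ext Q 0 = 0"
  by (simp add: lin_ext_def)

lemma lin_ext_sum: "lin_ext Q (sum F I) = (\<Sum>i\<in>I. lin_ext Q (F i))"
  by (induction I rule: infinite_finite_induct) (auto simp: lin_ext_add)

lemma lin_ext_single: "lin_ext Q (Poly_Mapping.single k v) = sconst v * Q k"
  by (cases "v = 0") (auto simp: lin_ext_def)

lemma lin_ext_sconst_mult_pw: "lin_ext Q (sconst v * pw k) = sconst v * Q k"
  by (simp add: sconst_mult_pw lin_ext_single)

lemma lin_ext_pw: "lin_ext Q (pw k) = Q k"
  using lin_ext_sconst_mult_pw[of Q 1 k] by simp

lemma lin_ext_pw_id: "lin_ext pw F = F"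
proof (rule poly_mapping_eqI)
  fix k
  have "Poly_Mapping.lookup (lin_ext pw F) k
      = (\<Sum>\<mu>\<in>Poly_Mapping.keys F. if \<mu> = k then Poly_Mapping.lookup F \<mu> else 0)"
    by (simp add: lin_ext_def lookup_sum sconst_mult_pw lookup_single when_def)
  then show "Poly_Mapping.lookup (lin_ext pw F) k = Poly_Mapping.lookup F k"
    by (simp add: in_keys_iff)
qed

lemma pw_expansion: "F = (\<Sum>\<mu>\<in>Poly_Mapping.keys F. sconst (Poly_Mapping.lookup F \<mu>) * pw \<mu>)"
  using lin_ext_pw_id[of F] by (simp add: lin_ext_def)

lemma lin_ext_sconst_mult: "lin_ext Q (sconst a * F) = sconst a * lin_ext Q F"
proof -
  have "sconst a * F = (\<Sum>\<mu>\<in>Poly_Mapping.keys F. sconst (a * Poly_Mapping.lookup F \<mu>) * pw \<mu>)"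
    by (subst pw_expansion[of F]) (simp add: sum_distrib_left mult.assoc[symmetric] sconst_mult)
  then show ?thesis
    by (simp only: lin_ext_sum lin_ext_sconst_mult_pw)
      (simp add: lin_ext_def sum_distrib_left sconst_mult[symmetric] mult.assoc)
qed

definition dp1_pw :: "nat multiset \<Rightarrow> symf" where
  "dp1_pw \<mu> = sconst (of_nat (count \<mu> 1)) * pw (\<mu> - {#1#})"

definition dp1 :: "symf \<Rightarrow> symf" where
  "dp1 = lin_ext dp1_pw"

lemma dp1_sum: "dp1 (sum F I) = (\<Sum>i\<in>I. dp1 (F i))"
  by (simp add: dp1_def lin_ext_sum)

lemma dp1_sconst_mult: "dp1 (sconst a * F) = sconst a * dp1 F"
  by (simp add: dp1_def lin_ext_sconst_mult)

lemma dp1_sconst_mult_pw: "dp1 (sconst v * pw k) = sconst v * dp1_pw k"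
  by (simp add: dp1_def lin_ext_sconst_mult_pw)

lemma dp1_pw: "dp1 (pw k) = dp1_pw k"
  by (simp add: dp1_def lin_ext_pw)

lemma dp1_expansion:
  "dp1 F = (\<Sum>\<mu>\<in>Poly_Mapping.keys F. sconst (Poly_Mapping.lookup F \<mu>) * dp1_pw \<mu>)"
  by (simp add: dp1_def lin_ext_def)

lemma dp1_sconst [simp]: "dp1 (sconst a) = 0"
  using dp1_sconst_mult_pw[of a "{#}"] by (simp add: dp1_pw_def)

lemma dp1_pw_add: "dp1_pw (a + b) = dp1_pw a * pw b + pw a * dp1_pw b"
proof -
  have shift: "sconst (of_nat (count a 1)) * pw (a - {#1#} + b)
      = sconst (of_nat (count a 1)) * pw (a + b - {#1#})" for a b :: "nat multiset"
    by (cases "1 \<in># a") (simp_all add: diff_union_single_conv not_in_iff)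
  have "dp1_pw a * pw b = sconst (of_nat (count a 1)) * pw (a + b - {#1#})"
    using shift[of a b] by (simp add: dp1_pw_def mult.assoc pw_mult)
  moreover have "pw a * dp1_pw b = sconst (of_nat (count b 1)) * pw (a + b - {#1#})"
    using shift[of b a] by (simp add: dp1_pw_def mult.left_commute[of "pw a"] pw_mult add.commute)
  ultimately show ?thesis
    by (simp add: dp1_pw_def sconst_add distrib_right)
qed

lemma dp1_pw_mult: "dp1 (pw a * X) = dp1_pw a * X + pw a * dp1 X"
proof -
  have "pw a * X = (\<Sum>b\<in>Poly_Mapping.keys X. sconst (Poly_Mapping.lookup X b) * pw (a + b))"
    by (subst pw_expansion[of X]) (simp add: sum_distrib_left mult.left_commute[of "pw a"] pw_mult)
  then have "dp1 (pw a * X)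
      = (\<Sum>b\<in>Poly_Mapping.keys X. sconst (Poly_Mapping.lookup X b) * dp1_pw (a + b))"
    by (simp add: dp1_sum dp1_sconst_mult_pw)
  also have "\<dots> = dp1_pw a * (\<Sum>b\<in>Poly_Mapping.keys X. sconst (Poly_Mapping.lookup X b) * pw b)
      + pw a * (\<Sum>b\<in>Poly_Mapping.keys X. sconst (Poly_Mapping.lookup X b) * dp1_pw b)"
    by (simp add: dp1_pw_add sum_distrib_left distrib_left sum.distrib mult.left_commute)
  also have "\<dots> = dp1_pw a * X + pw a * dp1 X"
    by (simp add: dp1_expansion pw_expansion[symmetric])
  finally show ?thesis .
qed

lemma dp1_mult: "dp1 (F * G) = dp1 F * G + F * dp1 G"
proof -
  have "F * G = (\<Sum>a\<in>Poly_Mapping.keys F. sconst (Poly_Mapping.lookup F a) * (pw a * G))"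
    by (subst pw_expansion[of F]) (simp add: sum_distrib_right mult.assoc)
  then have "dp1 (F * G) = (\<Sum>a\<in>Poly_Mapping.keys F.
      sconst (Poly_Mapping.lookup F a) * (dp1_pw a * G + pw a * dp1 G))"
    by (simp add: dp1_sum dp1_sconst_mult dp1_pw_mult)
  also have "\<dots> = (\<Sum>a\<in>Poly_Mapping.keys F. sconst (Poly_Mapping.lookup F a) * dp1_pw a) * G
      + (\<Sum>a\<in>Poly_Mapping.keys F. sconst (Poly_Mapping.lookup F a) * pw a) * dp1 G"
    by (simp add: sum_distrib_right distrib_left sum.distrib mult.assoc)
  also have "\<dots> = dp1 F * G + F * dp1 G"
    by (simp add: dp1_expansion pw_expansion[symmetric])
  finally show ?thesis .
qed

lemma dp1_prod:
  assumes "finite J"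
  shows "dp1 (\<Prod>j\<in>J. F j) = (\<Sum>j\<in>J. dp1 (F j) * (\<Prod>i\<in>J - {j}. F i))"
  using assms
proof (induction J rule: finite_induct)
  case empty
  show ?case
    using dp1_sconst[of 1] by simp
next
  case (insert a J)
  have "(\<Prod>i\<in>insert a J - {j}. F i) = F a * (\<Prod>i\<in>J - {j}. F i)" if "j \<in> J" for j
  proof -
    have "insert a J - {j} = insert a (J - {j})"
      using that insert.hyps by auto
    then show ?thesis
      using insert.hyps by simp
  qed
  moreover have "insert a J - {a} = J"
    using insert.hyps by auto
  ultimately show ?case
    using insert by (simp add: dp1_mult sum_distrib_left mult.left_commute)
qed

lemma lookup_dp1:
  "Poly_Mapping.lookup (dp1 F) \<mu> = of_nat (Suc (count \<mu> 1)) * Poly_Mapping.lookup F (add_mset 1 \<mu>)"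
proof -
  have "Poly_Mapping.lookup (dp1 F) \<mu> = (\<Sum>a\<in>Poly_Mapping.keys F.
      if a - {#1#} = \<mu> then Poly_Mapping.lookup F a * of_nat (count a 1) else 0)"
    unfolding dp1_expansion dp1_pw_def lookup_sum
    by (rule sum.cong[OF refl]) (simp add: sconst_mult_pw sconst_mult_single lookup_single when_def)
  also have "\<dots> = (\<Sum>a\<in>Poly_Mapping.keys F.
      if a = add_mset 1 \<mu> then of_nat (Suc (count \<mu> 1)) * Poly_Mapping.lookup F a else 0)"
  proof (rule sum.cong[OF refl])
    fix a
    show "(if a - {#1#} = \<mu> then Poly_Mapping.lookup F a * of_nat (count a 1) else 0) =
      (if a = add_mset 1 \<mu> then of_nat (Suc (count \<mu> 1)) * Poly_Mapping.lookup F a else 0)"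
    proof (cases "1 \<in># a")
      case True
      then have "a - {#1#} = \<mu> \<longleftrightarrow> a = add_mset 1 \<mu>"
        by (auto simp: insert_DiffM2)
      then show ?thesis
        by auto
    next
      case False
      then show ?thesis
        by (auto simp: not_in_iff)
    qed
  qed
  also have "\<dots> = of_nat (Suc (count \<mu> 1)) * Poly_Mapping.lookup F (add_mset 1 \<mu>)"
    by (simp add: in_keys_iff)
  finally show ?thesis .
qed

lemma lookup_p1_mult:
  "Poly_Mapping.lookup (pw {#1#} * G) \<mu> =
    (if 1 \<in># \<mu> then Poly_Mapping.lookup G (\<mu> - {#1#}) else 0)"
proof -
  have "pw {#1#} * G = (\<Sum>b\<in>Poly_Mapping.keys G.
      Poly_Mapping.single (add_mset 1 b) (Poly_Mapping.lookup G b))"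
    by (subst pw_expansion[of G]) (simp add: sum_distrib_left sconst_mult_pw pw_mult_single)
  then have "Poly_Mapping.lookup (pw {#1#} * G) \<mu> =
      (\<Sum>b\<in>Poly_Mapping.keys G. if add_mset 1 b = \<mu> then Poly_Mapping.lookup G b else 0)"
    by (simp add: lookup_sum lookup_single when_def)
  also have "\<dots> = (\<Sum>b\<in>Poly_Mapping.keys G.
      if b = \<mu> - {#1#} \<and> 1 \<in># \<mu> then Poly_Mapping.lookup G b else 0)"
    by (rule sum.cong[OF refl]) (metis add_mset_remove_trivial insert_DiffM union_single_eq_member)
  also have "\<dots> = (if 1 \<in># \<mu> then Poly_Mapping.lookup G (\<mu> - {#1#}) else 0)"
    by (auto simp: in_keys_iff)
  finally show ?thesis .
qed

section \<open>Plethysm and omega\<close>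

lemma dp1_lin_ext: "dp1 (lin_ext Q F) = lin_ext (\<lambda>\<mu>. dp1 (Q \<mu>)) F"
  unfolding lin_ext_def dp1_sum by (simp only: dp1_sconst_mult)

lemma lin_ext_dp1: "lin_ext Q (dp1 F) = (\<Sum>\<mu>\<in>Poly_Mapping.keys F.
    sconst (Poly_Mapping.lookup F \<mu>) * (sconst (of_nat (count \<mu> 1)) * Q (\<mu> - {#1#})))"
  unfolding dp1_expansion lin_ext_sum lin_ext_sconst_mult dp1_pw_def lin_ext_sconst_mult_pw lin_ext_pw ..

lemma adams_eq_lin_ext: "adams k g = lin_ext (\<lambda>\<mu>. pw (image_mset ((*) k) \<mu>)) g"
  by (simp add: adams_def lin_ext_def sconst_mult_pw)

lemma adams_1: "adams 1 g = g"
proof -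
  have "image_mset ((*) 1) \<mu> = \<mu>" for \<mu> :: "nat multiset"
    by (induction \<mu>) auto
  then show ?thesis
    unfolding adams_eq_lin_ext by (simp only: lin_ext_pw_id)
qed

lemma dp1_adams:
  assumes "k \<noteq> 1"
  shows "dp1 (adams k g) = 0"
proof -
  have "count (image_mset ((*) k) \<mu>) 1 = 0" for \<mu>
    using assms by (simp add: count_eq_zero_iff image_iff eq_commute[of 1])
  then have "dp1 (pw (image_mset ((*) k) \<mu>)) = 0" for \<mu>
    by (simp add: dp1_pw dp1_pw_def)
  then show ?thesis
    unfolding adams_eq_lin_ext dp1_lin_ext by (simp add: lin_ext_def)
qed

definition pw_pleth :: "symf \<Rightarrow> nat multiset \<Rightarrow> symf" where
  "pw_pleth g la = prod_mset (image_mset (\<lambda>i. adams i g) la)"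

lemma pleth_eq_lin_ext: "pleth f g = lin_ext (pw_pleth g) f"
  unfolding pleth_def lin_ext_def pw_pleth_def ..

lemma pleth_1: "pleth 1 g = 1"
  using lin_ext_pw[of "pw_pleth g" "{#}"] by (simp add: pleth_eq_lin_ext pw_pleth_def)

lemma pw_pleth_add_mset: "pw_pleth g (add_mset i la) = adams i g * pw_pleth g la"
  by (simp add: pw_pleth_def)

lemma dp1_pw_pleth: "dp1 (pw_pleth g la) = of_nat (count la 1) * dp1 g * pw_pleth g (la - {#1#})"
proof (induction la)
  case empty
  show ?case
    using dp1_sconst[of 1] by (simp add: pw_pleth_def)
next
  case (add i la)
  show ?case
  proof (cases "i = 1")
    case True
    have "pw_pleth g la = g * pw_pleth g (la - {#1#})" if "1 \<in># la"
      using that by (metis adams_1 pw_pleth_add_mset insert_DiffM)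
    then have "g * dp1 (pw_pleth g la) = of_nat (count la 1) * dp1 g * pw_pleth g la"
      unfolding add.IH by (cases "1 \<in># la") (simp_all add: not_in_iff mult.left_commute)
    moreover have "dp1 (pw_pleth g (add_mset i la)) = dp1 g * pw_pleth g la + g * dp1 (pw_pleth g la)"
      unfolding True pw_pleth_add_mset adams_1 dp1_mult ..
    ultimately show ?thesis
      using True by (simp add: distrib_right)
  next
    case False
    then show ?thesis
      using add.IH by (simp add: pw_pleth_add_mset dp1_mult dp1_adams mult.left_commute)
  qed
qed

lemma dp1_pleth: "dp1 (pleth f g) = pleth (dp1 f) g * dp1 g"
proof -
  have "dp1 (pleth f g) = (\<Sum>la\<in>Poly_Mapping.keys f. sconst (Poly_Mapping.lookup f la) *
      (sconst (of_nat (count la 1)) * pw_pleth g (la - {#1#}) * dp1 g))"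
    unfolding pleth_eq_lin_ext dp1_lin_ext unfolding lin_ext_def dp1_pw_pleth sconst_of_nat
    by (rule sum.cong[OF refl]) (simp only: mult.commute mult.left_commute mult.assoc)
  also have "\<dots> = pleth (dp1 f) g * dp1 g"
    unfolding pleth_eq_lin_ext lin_ext_dp1 sum_distrib_right by (simp only: mult.assoc)
  finally show ?thesis .
qed

definition omega_sign :: "nat multiset \<Rightarrow> complex" where
  "omega_sign \<mu> = (-1) ^ (sum_mset \<mu> - size \<mu>)"

lemma omega_eq_lin_ext: "omega F = lin_ext (\<lambda>\<mu>. sconst (omega_sign \<mu>) * pw \<mu>) F"
proof -
  have "Poly_Mapping.single \<mu> (s * a) = sconst a * (sconst s * pw \<mu>)" for \<mu> s a
    by (simp only: sconst_mult_pw sconst_mult_single mult.commute[of a s])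
  then show ?thesis
    unfolding omega_def lin_ext_def omega_sign_def by simp
qed

lemma omega_pw: "omega (pw \<mu>) = sconst (omega_sign \<mu>) * pw \<mu>"
  unfolding omega_eq_lin_ext lin_ext_pw ..

lemma omega_sign_diff_1:
  assumes "1 \<in># \<mu>"
  shows "omega_sign (\<mu> - {#1#}) = omega_sign \<mu>"
proof -
  obtain \<nu> where "\<mu> = add_mset 1 \<nu>"
    using assms by (metis multi_member_split)
  then show ?thesis
    by (simp add: omega_sign_def)
qed

lemma dp1_omega: "dp1 (omega F) = omega (dp1 F)"
proof -
  have "dp1 (omega F) = (\<Sum>\<mu>\<in>Poly_Mapping.keys F.
      sconst (Poly_Mapping.lookup F \<mu>) * (sconst (omega_sign \<mu>) * dp1_pw \<mu>))"
    unfolding omega_eq_lin_ext dp1_lin_ext unfolding dp1_sconst_mult dp1_pw lin_ext_def ..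
  also have "\<dots> = (\<Sum>\<mu>\<in>Poly_Mapping.keys F. sconst (Poly_Mapping.lookup F \<mu>) *
      (sconst (of_nat (count \<mu> 1)) * (sconst (omega_sign (\<mu> - {#1#})) * pw (\<mu> - {#1#}))))"
  proof (rule sum.cong[OF refl])
    fix \<mu>
    show "sconst (Poly_Mapping.lookup F \<mu>) * (sconst (omega_sign \<mu>) * dp1_pw \<mu>) =
      sconst (Poly_Mapping.lookup F \<mu>) *
        (sconst (of_nat (count \<mu> 1)) * (sconst (omega_sign (\<mu> - {#1#})) * pw (\<mu> - {#1#})))"
    proof (cases "1 \<in># \<mu>")
      case True
      then show ?thesis
        unfolding dp1_pw_def omega_sign_diff_1[OF True]
        by (simp only: mult.commute mult.left_commute mult.assoc)
    next
      case False
      then show ?thesis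
        by (simp add: dp1_pw_def not_in_iff)
    qed
  qed
  also have "\<dots> = omega (dp1 F)"
    unfolding omega_eq_lin_ext lin_ext_dp1 ..
  finally show ?thesis .
qed

section \<open>Permutations and cycle types\<close>

lemma finite_perms [simp]: "finite (perms m)"
  unfolding perms_def by (rule finite_permutations) simp

lemma card_perms: "card (perms m) = fact m"
  unfolding perms_def by (rule card_permutations) auto

lemma id_in_perms [simp]: "id \<in> perms m"
  by (simp add: perms_def)

lemma perms_0: "perms 0 = {id}"
  by (simp add: perms_def)

lemma perms_Suc_iff: "\<sigma> \<in> perms m \<longleftrightarrow> \<sigma> \<in> perms (Suc m) \<and> \<sigma> m = m"
proof
  assume "\<sigma> \<in> perms m"
  then show "\<sigma> \<in> perms (Suc m) \<and> \<sigma> m = m"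
    unfolding perms_def by (auto intro: permutes_subset permutes_not_in)
next
  assume "\<sigma> \<in> perms (Suc m) \<and> \<sigma> m = m"
  then show "\<sigma> \<in> perms m"
    unfolding perms_def mem_Collect_eq by (auto elim: permutes_superset simp: less_Suc_eq)
qed

lemma perms_compose: "g \<in> perms m \<Longrightarrow> h \<in> perms m \<Longrightarrow> g \<circ> h \<in> perms m"
  unfolding perms_def by (simp add: permutes_compose)

lemma perms_inv: "g \<in> perms m \<Longrightarrow> inv g \<in> perms m"
  unfolding perms_def by (simp add: permutes_inv)

lemma perms_conj: "g \<in> perms m \<Longrightarrow> \<sigma> \<in> perms m \<Longrightarrow> inv g \<circ> \<sigma> \<circ> g \<in> perms m"
  by (simp add: perms_compose perms_inv)

lemma transpose_in_perms: "x < m \<Longrightarrow> y < m \<Longrightarrow> Transposition.transpose x y \<in> perms m"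
  unfolding perms_def by (simp add: permutes_swap_id)

lemma cyc_orbit_fixpoint: "\<sigma> x = x \<Longrightarrow> cyc_orbit \<sigma> x = {x}"
proof -
  assume "\<sigma> x = x"
  then have "(\<sigma> ^^ k) x = x" for k
    by (induction k) auto
  then show ?thesis
    unfolding cyc_orbit_def by auto
qed

lemma card_cyc_orbit_eq_1: "card (cyc_orbit \<sigma> x) = 1 \<longleftrightarrow> \<sigma> x = x"
proof
  assume "card (cyc_orbit \<sigma> x) = 1"
  moreover have "x \<in> cyc_orbit \<sigma> x" "\<sigma> x \<in> cyc_orbit \<sigma> x"
    unfolding cyc_orbit_def by (auto intro: exI[of _ 0] exI[of _ 1])
  ultimately show "\<sigma> x = x"
    by (metis card_1_singletonE singletonD)
qed (simp add: cyc_orbit_fixpoint)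

lemma cycle_type_eq: "cycle_type m \<sigma> = image_mset card (mset_set (cyc_orbit \<sigma> ` {..<m}))"
proof -
  have "{cyc_orbit \<sigma> x | x. x < m} = cyc_orbit \<sigma> ` {..<m}"
    by auto
  then show ?thesis
    by (simp add: cycle_type_def)
qed

lemma cycle_type_Suc:
  assumes "\<sigma> \<in> perms m"
  shows "cycle_type (Suc m) \<sigma> = add_mset 1 (cycle_type m \<sigma>)"
proof -
  have "\<sigma> m = m"
    using perms_Suc_iff[THEN iffD1, OF assms] by simp
  then have "cyc_orbit \<sigma> ` {..<Suc m} = insert {m} (cyc_orbit \<sigma> ` {..<m})"
    by (auto simp: lessThan_Suc cyc_orbit_fixpoint)
  moreover have "{m} \<notin> cyc_orbit \<sigma> ` {..<m}"
    unfolding cyc_orbit_def by (force intro: exI[of _ 0])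
  ultimately show ?thesis
    unfolding cycle_type_eq by (simp add: mset_set.insert)
qed

lemma cycle_type_id: "cycle_type m id = replicate_mset m 1"
proof (induction m)
  case 0
  show ?case
    by (simp add: cycle_type_def)
next
  case (Suc m)
  have "cycle_type (Suc m) id = add_mset 1 (cycle_type m id)"
    by (rule cycle_type_Suc) simp
  then show ?case
    unfolding Suc.IH by (simp only: replicate_mset_Suc)
qed

lemma count_cycle_type_1: "count (cycle_type m \<sigma>) 1 = card {x. x < m \<and> \<sigma> x = x}"
proof -
  let ?O = "cyc_orbit \<sigma> ` {..<m}"
  have "count (cycle_type m \<sigma>) 1 = card (card -` {1} \<inter> ?O)"
    unfolding cycle_type_eq count_image_mset by simp
  also have "card -` {1} \<inter> ?O = (\<lambda>x. {x}) ` {x. x < m \<and> \<sigma> x = x}"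
  proof (rule set_eqI, rule iffI)
    fix B
    assume "B \<in> card -` {1} \<inter> ?O"
    then obtain x where x: "x < m" "B = cyc_orbit \<sigma> x" "card (cyc_orbit \<sigma> x) = 1"
      by auto
    then have "\<sigma> x = x"
      using card_cyc_orbit_eq_1 by blast
    then show "B \<in> (\<lambda>x. {x}) ` {x. x < m \<and> \<sigma> x = x}"
      using x cyc_orbit_fixpoint by auto
  next
    fix B
    assume "B \<in> (\<lambda>x. {x}) ` {x. x < m \<and> \<sigma> x = x}"
    then obtain x where "x < m" "\<sigma> x = x" "B = {x}"
      by auto
    then show "B \<in> card -` {1} \<inter> ?O"
      using cyc_orbit_fixpoint[of \<sigma> x] by auto
  qed
  also have "card \<dots> = card {x. x < m \<and> \<sigma> x = x}"
    by (rule card_image) (auto simp: inj_on_def)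
  finally show ?thesis .
qed

lemma cyc_orbit_conj:
  assumes "bij g"
  shows "cyc_orbit (inv g \<circ> \<sigma> \<circ> g) x = inv g ` cyc_orbit \<sigma> (g x)"
proof -
  have "(inv g \<circ> \<sigma> \<circ> g) ^^ k = inv g \<circ> (\<sigma> ^^ k) \<circ> g" for k
    by (induction k)
      (simp_all add: fun_eq_iff surj_f_inv_f[OF bij_is_surj[OF assms]] inv_f_f[OF bij_is_inj[OF assms]])
  then show ?thesis
    unfolding cyc_orbit_def by auto
qed

lemma cycle_type_conj:
  assumes "g \<in> perms m"
  shows "cycle_type m (inv g \<circ> \<sigma> \<circ> g) = cycle_type m \<sigma>"
proof -
  have gp: "g permutes {..<m}"
    using assms by (simp add: perms_def)
  let ?O = "cyc_orbit \<sigma> ` {..<m}"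
  have inj: "inj (inv g)"
    using permutes_inj[OF permutes_inv[OF gp]] .
  have "cyc_orbit (inv g \<circ> \<sigma> \<circ> g) ` {..<m} = (\<lambda>B. inv g ` B) ` (cyc_orbit \<sigma> ` (g ` {..<m}))"
    unfolding cyc_orbit_conj[OF permutes_bij[OF gp]] by (simp add: image_image)
  then have orbits: "cyc_orbit (inv g \<circ> \<sigma> \<circ> g) ` {..<m} = (\<lambda>B. inv g ` B) ` ?O"
    by (simp only: permutes_image[OF gp])
  have "inj_on (\<lambda>B. inv g ` B) ?O"
    using inj by (auto simp: inj_on_def inj_image_eq_iff)
  then have "cycle_type m (inv g \<circ> \<sigma> \<circ> g) = image_mset (\<lambda>B. card (inv g ` B)) (mset_set ?O)"
    unfolding cycle_type_eq orbits by (simp add: image_mset_mset_set[symmetric] multiset.map_comp o_def)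
  also have "\<dots> = cycle_type m \<sigma>"
    unfolding cycle_type_eq
    by (rule image_mset_cong) (use inj in \<open>auto simp: card_image inj_on_subset\<close>)
  finally show ?thesis .
qed

section \<open>Restriction and induction through the characteristic\<close>

lemma zee_add_mset_1: "zee (add_mset 1 \<mu>) = zee \<mu> * Suc (count \<mu> 1)"
proof -
  have split: "zee \<nu> = fact (count \<nu> 1) * (\<Prod>j\<in>set_mset \<nu> - {1}. j ^ count \<nu> j * fact (count \<nu> j))"
    for \<nu>
  proof (cases "1 \<in># \<nu>")
    case True
    then show ?thesis
      unfolding zee_def by (simp add: prod.remove[of "set_mset \<nu>" 1])
  next
    case False
    then show ?thesis
      unfolding zee_def by (simp add: not_in_iff)
  qed
  have "(\<Prod>j\<in>set_mset (add_mset 1 \<mu>) - {1}.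
        j ^ count (add_mset 1 \<mu>) j * fact (count (add_mset 1 \<mu>) j))
      = (\<Prod>j\<in>set_mset \<mu> - {1}. j ^ count \<mu> j * fact (count \<mu> j))"
    by (rule prod.cong) auto
  then show ?thesis
    unfolding split[of "add_mset 1 \<mu>"] split[of \<mu>] by (simp add: algebra_simps)
qed

lemma char_of_add: "char_of m (F + G) \<sigma> = char_of m F \<sigma> + char_of m G \<sigma>"
  by (simp add: char_of_def lookup_add distrib_left)

lemma res_char_of: "res (Suc k) (char_of (Suc k) F) = char_of k (dp1 F)"
proof (rule ext)
  fix \<sigma>
  show "res (Suc k) (char_of (Suc k) F) \<sigma> = char_of k (dp1 F) \<sigma>"
  proof (cases "\<sigma> \<in> perms k")
    case True
    let ?\<mu> = "cycle_type k \<sigma>"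
    have "\<sigma> \<in> perms (Suc k)" "cycle_type (Suc k) \<sigma> = add_mset 1 ?\<mu>"
      using perms_Suc_iff[THEN iffD1, OF True] cycle_type_Suc[OF True] by simp_all
    then have "res (Suc k) (char_of (Suc k) F) \<sigma>
        = of_nat (zee (add_mset 1 ?\<mu>)) * Poly_Mapping.lookup F (add_mset 1 ?\<mu>)"
      using True by (simp add: res_def char_of_def)
    also have "\<dots> = char_of k (dp1 F) \<sigma>"
      unfolding zee_add_mset_1 char_of_def lookup_dp1 using True by (simp add: algebra_simps)
    finally show ?thesis .
  next
    case False
    then show ?thesis
      by (simp add: res_def char_of_def)
  qed
qed

lemma card_perms_Suc_last_value:
  assumes "x < Suc m"
  shows "card {g \<in> perms (Suc m). g m = x} = fact m"
proof -
  let ?t = "Transposition.transpose x m"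
  have t: "?t \<in> perms (Suc m)"
    using assms by (simp add: transpose_in_perms)
  have "{g \<in> perms (Suc m). g m = x} = (\<lambda>h. ?t \<circ> h) ` perms m"
  proof (rule set_eqI, rule iffI)
    fix g
    assume "g \<in> {g \<in> perms (Suc m). g m = x}"
    then have "?t \<circ> g \<in> perms (Suc m) \<and> (?t \<circ> g) m = m"
      using perms_compose[OF t] by simp
    then have "?t \<circ> g \<in> perms m"
      by (rule perms_Suc_iff[THEN iffD2])
    moreover have "g = ?t \<circ> (?t \<circ> g)"
      by (simp add: o_assoc)
    ultimately show "g \<in> (\<lambda>h. ?t \<circ> h) ` perms m"
      by blast
  next
    fix g
    assume "g \<in> (\<lambda>h. ?t \<circ> h) ` perms m"
    then obtain h where h: "h \<in> perms m" and g: "g = ?t \<circ> h"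
      by blast
    from h have "h \<in> perms (Suc m) \<and> h m = m"
      by (rule perms_Suc_iff[THEN iffD1])
    then show "g \<in> {g \<in> perms (Suc m). g m = x}"
      using perms_compose[OF t] g by simp
  qed
  also have "card \<dots> = card (perms m)"
  proof (rule card_image, rule inj_onI)
    fix h1 h2
    assume "?t \<circ> h1 = ?t \<circ> h2"
    then have "?t \<circ> (?t \<circ> h1) = ?t \<circ> (?t \<circ> h2)"
      by simp
    then show "h1 = h2"
      by (simp add: o_assoc)
  qed
  finally show ?thesis
    by (simp add: card_perms)
qed

lemma card_perms_Suc_last_to_fixpoint:
  "card {g \<in> perms (Suc m). \<sigma> (g m) = g m} = card {x. x < Suc m \<and> \<sigma> x = x} * fact m"
proof -
  let ?X = "{x. x < Suc m \<and> \<sigma> x = x}"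
  have "g m < Suc m" if "g \<in> perms (Suc m)" for g
    using that permutes_in_image[of g "{..<Suc m}" m] by (simp add: perms_def)
  then have "{g \<in> perms (Suc m). \<sigma> (g m) = g m} = (\<Union>x\<in>?X. {g \<in> perms (Suc m). g m = x})"
    by auto
  also have "card \<dots> = (\<Sum>x\<in>?X. card {g \<in> perms (Suc m). g m = x})"
    by (rule card_UN_disjoint) auto
  also have "\<dots> = (\<Sum>x\<in>?X. fact m)"
    by (rule sum.cong) (auto simp: card_perms_Suc_last_value)
  finally show ?thesis
    by simp
qed

text \<open>A conjugate of \<sigma> lies in S_m exactly when the conjugating permutation sends m to a
fixed point of \<sigma>, and then its cycle type is that of \<sigma> with one part 1 removed.\<close>

lemma char_of_conj_restrict:
  assumes g: "g \<in> perms (Suc m)" and \<sigma>: "\<sigma> \<in> perms (Suc m)"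
  defines "\<mu> \<equiv> cycle_type (Suc m) \<sigma> - {#1#}"
  shows "(if inv g \<circ> \<sigma> \<circ> g \<in> perms m then char_of m G (inv g \<circ> \<sigma> \<circ> g) else 0) =
    (if \<sigma> (g m) = g m then of_nat (zee \<mu>) * Poly_Mapping.lookup G \<mu> else 0)"
proof -
  let ?\<tau> = "inv g \<circ> \<sigma> \<circ> g"
  have gp: "g permutes {..<Suc m}"
    using g by (simp add: perms_def)
  have "?\<tau> \<in> perms m \<longleftrightarrow> inv g (\<sigma> (g m)) = m"
    using perms_Suc_iff[of ?\<tau> m] perms_conj[OF g \<sigma>] by simp
  also have "\<dots> \<longleftrightarrow> \<sigma> (g m) = g m"
    using permutes_inverses[OF gp] by metis
  finally have iff: "?\<tau> \<in> perms m \<longleftrightarrow> \<sigma> (g m) = g m" .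
  have "cycle_type m ?\<tau> = \<mu>" if "?\<tau> \<in> perms m"
    using cycle_type_Suc[OF that] cycle_type_conj[OF g] unfolding \<mu>_def
    by (metis add_mset_remove_trivial)
  then show ?thesis
    using iff by (simp add: char_of_def)
qed

lemma char_of_p1_mult:
  assumes "\<sigma> \<in> perms (Suc m)"
  defines "\<mu> \<equiv> cycle_type (Suc m) \<sigma>"
  shows "char_of (Suc m) (pw {#1#} * G) \<sigma> =
    of_nat (count \<mu> 1) * (of_nat (zee (\<mu> - {#1#})) * Poly_Mapping.lookup G (\<mu> - {#1#}))"
proof (cases "1 \<in># \<mu>")
  case True
  then have "zee \<mu> = zee (\<mu> - {#1#}) * count \<mu> 1"
    using zee_add_mset_1[of "\<mu> - {#1#}"] by (simp add: insert_DiffM)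
  then show ?thesis
    unfolding char_of_def lookup_p1_mult \<mu>_def[symmetric] using True assms(1) by simp
next
  case False
  then have "count \<mu> 1 = 0"
    by (simp add: not_in_iff)
  then show ?thesis
    unfolding char_of_def lookup_p1_mult \<mu>_def[symmetric] using False assms(1) by simp
qed

lemma ind_char_of: "ind m (char_of m G) = char_of (Suc m) (pw {#1#} * G)"
proof (rule ext)
  fix \<sigma>
  show "ind m (char_of m G) \<sigma> = char_of (Suc m) (pw {#1#} * G) \<sigma>"
  proof (cases "\<sigma> \<in> perms (Suc m)")
    case False
    then show ?thesis
      by (simp add: ind_def induce_char_def char_of_def)
  next
    case True
    define \<mu> where "\<mu> = cycle_type (Suc m) \<sigma> - {#1#}"
    let ?K = "of_nat (zee \<mu>) * Poly_Mapping.lookup G \<mu>"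
    have "(\<Sum>g\<in>perms (Suc m).
        if inv g \<circ> \<sigma> \<circ> g \<in> perms m then char_of m G (inv g \<circ> \<sigma> \<circ> g) else 0)
      = (\<Sum>g\<in>perms (Suc m). if \<sigma> (g m) = g m then ?K else 0)"
      using True by (intro sum.cong) (simp_all add: char_of_conj_restrict \<mu>_def)
    also have "\<dots> = of_nat (card {g \<in> perms (Suc m). \<sigma> (g m) = g m}) * ?K"
      by (simp add: sum.inter_filter[symmetric])
    also have "\<dots> = of_nat (count (cycle_type (Suc m) \<sigma>) 1 * fact m) * ?K"
      by (simp only: card_perms_Suc_last_to_fixpoint count_cycle_type_1)
    finally have "ind m (char_of m G) \<sigma> = of_nat (count (cycle_type (Suc m) \<sigma>) 1) * ?K"
      using True by (simp add: ind_def induce_char_def card_perms)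
    then show ?thesis
      using char_of_p1_mult[OF True] by (simp only: \<mu>_def)
  qed
qed

section \<open>Restricting characters: d/dp_1 of a Frobenius characteristic\<close>

lemma sum_perms_fixing:
  assumes x: "x < Suc k"
    and invariant: "\<And>g \<sigma>. g \<in> perms (Suc k) \<Longrightarrow> \<sigma> \<in> perms (Suc k) \<Longrightarrow> F (inv g \<circ> \<sigma> \<circ> g) = F \<sigma>"
  shows "(\<Sum>\<sigma>\<in>{\<sigma> \<in> perms (Suc k). \<sigma> x = x}. F \<sigma>) = (\<Sum>\<sigma>\<in>perms k. F \<sigma>)"
proof -
  let ?t = "Transposition.transpose x k"
  have t: "?t \<in> perms (Suc k)"
    using x by (simp add: transpose_in_perms)
  have conj: "?t \<circ> \<sigma> \<circ> ?t = inv ?t \<circ> \<sigma> \<circ> ?t" for \<sigma>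
    by simp
  have perms_k: "perms k = {\<sigma> \<in> perms (Suc k). \<sigma> k = k}"
    using perms_Suc_iff by blast
  show ?thesis
    unfolding perms_k
  proof (rule sum.reindex_bij_witness[where i = "\<lambda>\<sigma>. ?t \<circ> \<sigma> \<circ> ?t" and j = "\<lambda>\<sigma>. ?t \<circ> \<sigma> \<circ> ?t"])
    fix \<sigma>
    assume \<sigma>: "\<sigma> \<in> {\<sigma> \<in> perms (Suc k). \<sigma> x = x}"
    show "?t \<circ> (?t \<circ> \<sigma> \<circ> ?t) \<circ> ?t = \<sigma>"
      by (simp add: fun_eq_iff)
    show "?t \<circ> \<sigma> \<circ> ?t \<in> {\<sigma> \<in> perms (Suc k). \<sigma> k = k}"
      using \<sigma> perms_conj[OF t, of \<sigma>] by auto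
    show "F (?t \<circ> \<sigma> \<circ> ?t) = F \<sigma>"
      using \<sigma> invariant[OF t] unfolding conj by auto
  next
    fix \<sigma>
    assume \<sigma>: "\<sigma> \<in> {\<sigma> \<in> perms (Suc k). \<sigma> k = k}"
    show "?t \<circ> (?t \<circ> \<sigma> \<circ> ?t) \<circ> ?t = \<sigma>"
      by (simp add: fun_eq_iff)
    show "?t \<circ> \<sigma> \<circ> ?t \<in> {\<sigma> \<in> perms (Suc k). \<sigma> x = x}"
      using \<sigma> perms_conj[OF t, of \<sigma>] by auto
  qed
qed

text \<open>Every fixed point x of \<sigma> contributes one term p_(\<mu> - 1) to d/dp_1 p_\<mu>; swapping the
two sums and conjugating x to the last point k identifies the result with the characteristic
of the restriction.\<close>

lemma dp1_frob:
  assumes invariant: "\<And>g \<sigma>. g \<in> perms (Suc k) \<Longrightarrow> \<sigma> \<in> perms (Suc k) \<Longrightarrow> \<chi> (inv g \<circ> \<sigma> \<circ> g) = \<chi> \<sigma>"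
  shows "dp1 (frob (Suc k) \<chi>) = frob k \<chi>"
proof -
  define F where
    "F \<sigma> = sconst (\<chi> \<sigma> / of_nat (fact (Suc k))) * pw (cycle_type (Suc k) \<sigma> - {#1#})" for \<sigma>
  have F_class: "F (inv g \<circ> \<sigma> \<circ> g) = F \<sigma>" if "g \<in> perms (Suc k)" "\<sigma> \<in> perms (Suc k)" for g \<sigma>
    using that invariant cycle_type_conj unfolding F_def by simp
  have "dp1 (frob (Suc k) \<chi>)
      = (\<Sum>\<sigma>\<in>perms (Suc k). of_nat (card {x. x < Suc k \<and> \<sigma> x = x}) * F \<sigma>)"
    unfolding frob_def dp1_sum dp1_sconst_mult_pw dp1_pw_def F_def count_cycle_type_1 sconst_of_nat
    by (simp only: mult.left_commute)
  also have "\<dots> = (\<Sum>\<sigma>\<in>perms (Suc k). \<Sum>x\<in>{x. x \<in> {..<Suc k} \<and> \<sigma> x = x}. F \<sigma>)"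
    by simp
  also have "\<dots> = (\<Sum>x\<in>{..<Suc k}. \<Sum>\<sigma>\<in>{\<sigma>. \<sigma> \<in> perms (Suc k) \<and> \<sigma> x = x}. F \<sigma>)"
    by (rule sum.swap_restrict) auto
  also have "\<dots> = (\<Sum>x\<in>{..<Suc k}. \<Sum>\<sigma>\<in>perms k. F \<sigma>)"
    by (rule sum.cong[OF refl]) (use sum_perms_fixing[of _ k F] F_class in auto)
  also have "\<dots> = (\<Sum>\<sigma>\<in>perms k. of_nat (Suc k) * F \<sigma>)"
    by (simp add: sum_distrib_left)
  also have "\<dots> = frob k \<chi>"
    unfolding frob_def
  proof (rule sum.cong[OF refl])
    fix \<sigma>
    assume \<sigma>: "\<sigma> \<in> perms k"
    have "cycle_type (Suc k) \<sigma> - {#1#} = cycle_type k \<sigma>"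
      using cycle_type_Suc[OF \<sigma>] by simp
    moreover have "of_nat (Suc k) * (\<chi> \<sigma> / of_nat (fact (Suc k))) = \<chi> \<sigma> / of_nat (fact k)"
      by (simp only: fact_Suc of_nat_mult of_nat_id) (simp del: of_nat_Suc)
    ultimately show "of_nat (Suc k) * F \<sigma> = sconst (\<chi> \<sigma> / of_nat (fact k)) * pw (cycle_type k \<sigma>)"
      unfolding F_def sconst_of_nat[symmetric] mult.assoc[symmetric] sconst_mult by simp
  qed
  finally show ?thesis .
qed

lemma frob_0: "frob 0 \<chi> = sconst (\<chi> id)"
  by (simp add: frob_def perms_0 cycle_type_def)

lemma hsym_0: "hsym 0 = 1"
  by (simp add: hsym_def frob_0)

lemma esym_0: "esym 0 = 1"
  by (simp add: esym_def frob_0)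

lemma dp1_hsym: "dp1 (hsym (Suc k)) = hsym k"
  unfolding hsym_def by (rule dp1_frob) simp

lemma sign_conj:
  assumes "g \<in> perms m" "\<sigma> \<in> perms m"
  shows "sign (inv g \<circ> \<sigma> \<circ> g) = sign \<sigma>"
proof -
  have "permutation g" "permutation \<sigma>"
    using assms unfolding perms_def by (auto intro: permutes_imp_permutation)
  then show ?thesis
    by (simp add: sign_compose permutation_compose permutation_inverse sign_inverse)
qed

lemma dp1_esym: "dp1 (esym (Suc k)) = esym k"
  unfolding esym_def by (rule dp1_frob) (simp add: sign_conj)

section \<open>The Lie characters restrict to regular representations\<close>

lemma ncycle_funpow: "y < n \<Longrightarrow> (ncycle n ^^ k) y = (y + k) mod n"
  by (induction k) (simp_all add: ncycle_def mod_Suc_eq)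

lemma Cn_fixpoint_imp_id:
  assumes "h \<in> Cn n" "y < n" "h y = y"
  shows "h = id"
proof -
  obtain k where k: "k < n" "h = ncycle n ^^ k"
    using assms(1) unfolding Cn_def by auto
  have "(y + k) mod n = y"
    using assms(2,3) k ncycle_funpow[of y n k] by simp
  then have "k = 0"
    using k(1) assms(2) by (cases "y + k < n") (simp_all add: le_mod_geq)
  then show ?thesis
    using k by simp
qed

lemma id_in_Cn: "0 < n \<Longrightarrow> id \<in> Cn n"
  unfolding Cn_def by (auto intro!: exI[of _ 0])

lemma chi_zeta_id: "0 < n \<Longrightarrow> chi_zeta n id = 1"
proof -
  assume n: "0 < n"
  have "(THE k. k < n \<and> id = ncycle n ^^ k) = 0"
  proof (rule the_equality)
    fix k
    assume k: "k < n \<and> id = ncycle n ^^ k"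
    then have "(ncycle n ^^ k) 0 = 0"
      by (metis id_apply)
    then show "k = 0"
      using ncycle_funpow[of 0 n k] n k by simp
  qed (use n in simp)
  then show ?thesis
    unfolding chi_zeta_def by simp
qed

lemma card_Cn: "0 < n \<Longrightarrow> card (Cn n) = n"
proof -
  assume n: "0 < n"
  have "Cn n = (\<lambda>k. ncycle n ^^ k) ` {..<n}"
    unfolding Cn_def by auto
  moreover have "inj_on (\<lambda>k. ncycle n ^^ k) {..<n}"
  proof (rule inj_onI)
    fix a b
    assume "a \<in> {..<n}" "b \<in> {..<n}" "ncycle n ^^ a = ncycle n ^^ b"
    then show "a = b"
      using ncycle_funpow[of 0 n a] ncycle_funpow[of 0 n b] n by (metis add_0 lessThan_iff mod_less)
  qed
  ultimately show ?thesis
    by (simp add: card_image)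
qed

lemma induce_char_conj:
  assumes t: "t \<in> perms n" and \<sigma>: "\<sigma> \<in> perms n"
  shows "induce_char (perms n) H \<psi> (inv t \<circ> \<sigma> \<circ> t) = induce_char (perms n) H \<psi> \<sigma>"
proof -
  have tp: "t permutes {..<n}"
    using t by (simp add: perms_def)
  have "(\<Sum>g\<in>perms n. if inv g \<circ> (inv t \<circ> \<sigma> \<circ> t) \<circ> g \<in> H then \<psi> (inv g \<circ> (inv t \<circ> \<sigma> \<circ> t) \<circ> g) else 0)
      = (\<Sum>g\<in>perms n. if inv g \<circ> \<sigma> \<circ> g \<in> H then \<psi> (inv g \<circ> \<sigma> \<circ> g) else 0)"
  proof (rule sum.reindex_bij_witness[where j = "\<lambda>g. t \<circ> g" and i = "\<lambda>g. inv t \<circ> g"])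
    fix g
    assume g: "g \<in> perms n"
    have gp: "g permutes {..<n}"
      using g by (simp add: perms_def)
    show "inv t \<circ> (t \<circ> g) = g"
      using permutes_inv_o(2)[OF tp] by (simp add: o_assoc)
    show "t \<circ> g \<in> perms n"
      using perms_compose[OF t g] .
    have "inv (t \<circ> g) = inv g \<circ> inv t"
      using o_inv_distrib[OF permutes_bij[OF tp] permutes_bij[OF gp]] .
    then show "(if inv (t \<circ> g) \<circ> \<sigma> \<circ> (t \<circ> g) \<in> H then \<psi> (inv (t \<circ> g) \<circ> \<sigma> \<circ> (t \<circ> g)) else 0) =
      (if inv g \<circ> (inv t \<circ> \<sigma> \<circ> t) \<circ> g \<in> H then \<psi> (inv g \<circ> (inv t \<circ> \<sigma> \<circ> t) \<circ> g) else 0)"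
      by (simp add: o_assoc)
  next
    fix g
    assume g: "g \<in> perms n"
    show "t \<circ> (inv t \<circ> g) = g"
      using permutes_inv_o(1)[OF tp] by (simp add: o_assoc)
    show "inv t \<circ> g \<in> perms n"
      using perms_compose[OF perms_inv[OF t] g] .
  qed
  then show ?thesis
    using \<sigma> perms_conj[OF t \<sigma>] unfolding induce_char_def by simp
qed

lemma conj_in_Cn_imp_id:
  assumes g: "g \<in> perms n" and y: "y < n" "\<tau> y = y" and c: "inv g \<circ> \<tau> \<circ> g \<in> Cn n"
  shows "\<tau> = id"
proof -
  have gp: "g permutes {..<n}"
    using g by (simp add: perms_def)
  have "inv g y < n"
    using permutes_in_image[OF permutes_inv[OF gp]] y(1) by simp
  moreover have "(inv g \<circ> \<tau> \<circ> g) (inv g y) = inv g y"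
    using y(2) permutes_inverses(1)[OF gp, of y] by simp
  ultimately have "inv g \<circ> \<tau> \<circ> g = id"
    using Cn_fixpoint_imp_id[OF c] by blast
  then have "(inv g \<circ> \<tau> \<circ> g) (inv g z) = inv g z" for z
    by simp
  then have "inv g (\<tau> z) = inv g z" for z
    using permutes_inverses(1)[OF gp] by simp
  then show "\<tau> = id"
    using permutes_inj[OF permutes_inv[OF gp]] by (simp add: fun_eq_iff inj_eq)
qed

lemma Lie_char_on_perms:
  assumes \<tau>: "\<tau> \<in> perms k"
  shows "Lie_char (Suc k) \<tau> = (if \<tau> = id then of_nat (fact k) else 0)"
proof (cases "\<tau> = id")
  case True
  have "(\<Sum>g\<in>perms (Suc k). if inv g \<circ> id \<circ> g \<in> Cn (Suc k)
      then chi_zeta (Suc k) (inv g \<circ> id \<circ> g) else 0) = (\<Sum>g\<in>perms (Suc k). 1)"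
  proof (rule sum.cong[OF refl])
    fix g
    assume "g \<in> perms (Suc k)"
    then have "inv g \<circ> id \<circ> g = id"
      using permutes_inv_o(2)[of g "{..<Suc k}"] by (simp add: perms_def)
    then show "(if inv g \<circ> id \<circ> g \<in> Cn (Suc k) then chi_zeta (Suc k) (inv g \<circ> id \<circ> g) else 0) = 1"
      by (simp add: id_in_Cn chi_zeta_id)
  qed
  moreover have "of_nat (fact (Suc k)) / of_nat (Suc k) = (of_nat (fact k) :: complex)"
    by (simp only: fact_Suc of_nat_mult of_nat_id) (simp del: of_nat_Suc)
  ultimately show ?thesis
    unfolding True Lie_char_def induce_char_def by (simp add: card_perms card_Cn del: of_nat_Suc)
next
  case False
  have "\<tau> \<in> perms (Suc k)" "\<tau> k = k"
    using perms_Suc_iff[THEN iffD1, OF \<tau>] by simp_all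
  then have "inv g \<circ> \<tau> \<circ> g \<notin> Cn (Suc k)" if "g \<in> perms (Suc k)" for g
    using conj_in_Cn_imp_id[OF that, of k \<tau>] False by auto
  then show ?thesis
    using False \<open>\<tau> \<in> perms (Suc k)\<close> by (simp add: Lie_char_def induce_char_def)
qed

lemma dp1_ell: "dp1 (ell (Suc k)) = pw (replicate_mset k 1)"
proof -
  have "dp1 (ell (Suc k)) = frob k (Lie_char (Suc k))"
    unfolding ell_def
  proof (rule dp1_frob)
    fix g \<sigma>
    assume "g \<in> perms (Suc k)" "\<sigma> \<in> perms (Suc k)"
    then show "Lie_char (Suc k) (inv g \<circ> \<sigma> \<circ> g) = Lie_char (Suc k) \<sigma>"
      unfolding Lie_char_def by (rule induce_char_conj)
  qed
  also have "\<dots> = (\<Sum>\<tau>\<in>perms k. if \<tau> = id then pw (replicate_mset k 1) else 0)"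
    unfolding frob_def
  proof (rule sum.cong[OF refl])
    fix \<tau>
    assume \<tau>: "\<tau> \<in> perms k"
    show "sconst (Lie_char (Suc k) \<tau> / of_nat (fact k)) * pw (cycle_type k \<tau>)
        = (if \<tau> = id then pw (replicate_mset k 1) else 0)"
      using Lie_char_on_perms[OF \<tau>] by (simp add: cycle_type_id)
  qed
  also have "\<dots> = pw (replicate_mset k 1)"
    by simp
  finally show ?thesis .
qed

lemma dp1_piL: "dp1 (piL (Suc k)) = pw (replicate_mset k 1)"
  unfolding piL_def dp1_omega dp1_ell omega_pw by (simp add: omega_sign_def)

section \<open>Sums over partitions without parts 1\<close>

lemma size_le_sum_mset: "0 \<notin># M \<Longrightarrow> size M \<le> sum_mset (M :: nat multiset)"
  by (induction M) auto

lemma hat_parts_iff: "la \<in> hat_parts i n \<longleftrightarrow>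
    sum_mset la = n \<and> 0 \<notin># la \<and> 1 \<notin># la \<and> sum_mset la - size la = i"
  by (auto simp: hat_parts_def partitions_def rank_def)

lemma finite_hat_parts: "finite (hat_parts i n)"
proof (rule finite_subset)
  show "hat_parts i n \<subseteq> (\<Union>k\<in>{..n}. multisets_of_size {..n} k)"
  proof
    fix la
    assume la: "la \<in> hat_parts i n"
    then have "set_mset la \<subseteq> {..n}"
      by (auto simp: hat_parts_iff dest!: multi_member_split)
    moreover have "size la \<le> n"
      using la size_le_sum_mset by (auto simp: hat_parts_iff)
    ultimately show "la \<in> (\<Union>k\<in>{..n}. multisets_of_size {..n} k)"
      by (auto simp: multisets_of_size_def)
  qed
qed auto

lemma hat_parts_part_bounds:
  assumes "la \<in> hat_parts i n" "j \<in># la"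
  shows "2 \<le> j \<and> j \<le> Suc i \<and> j \<le> n"
proof -
  obtain la' where la': "la = add_mset j la'"
    using assms(2) by (metis multi_member_split)
  have h: "sum_mset la = n" "0 \<notin># la" "1 \<notin># la" "sum_mset la - size la = i"
    using assms(1) by (auto simp: hat_parts_iff)
  have "j \<noteq> 0" "j \<noteq> 1"
    using h(2,3) assms(2) by metis+
  moreover have "size la' \<le> sum_mset la'"
    using h(2) la' by (intro size_le_sum_mset) auto
  ultimately show ?thesis
    using h la' by auto
qed

lemma hat_parts_with_part:
  assumes "2 \<le> j" "j \<le> Suc i" "j \<le> n"
  shows "{la \<in> hat_parts i n. j \<in># la} = add_mset j ` hat_parts (Suc i - j) (n - j)"
proof (rule set_eqI, rule iffI)
  fix la
  assume "la \<in> {la \<in> hat_parts i n. j \<in># la}"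
  then have la: "la \<in> hat_parts i n" "j \<in># la"
    by auto
  obtain la' where la': "la = add_mset j la'"
    using la(2) by (metis multi_member_split)
  have "size la' \<le> sum_mset la'"
    using la(1) la' by (intro size_le_sum_mset) (auto simp: hat_parts_iff)
  then have "la' \<in> hat_parts (Suc i - j) (n - j)"
    using la(1) la' by (auto simp: hat_parts_iff)
  then show "la \<in> add_mset j ` hat_parts (Suc i - j) (n - j)"
    using la' by auto
next
  fix la
  assume "la \<in> add_mset j ` hat_parts (Suc i - j) (n - j)"
  then obtain la' where la': "la = add_mset j la'" "la' \<in> hat_parts (Suc i - j) (n - j)"
    by auto
  have "size la' \<le> sum_mset la'"
    using la'(2) by (intro size_le_sum_mset) (auto simp: hat_parts_iff)
  then have "la \<in> hat_parts i n"
    using la' assms by (auto simp: hat_parts_iff)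
  then show "la \<in> {la \<in> hat_parts i n. j \<in># la}"
    using la'(1) by auto
qed

lemma sum_hat_parts_with_part:
  "(\<Sum>la\<in>{la. la \<in> hat_parts i n \<and> j \<in># la}. F (la - {#j#})) =
    (if 2 \<le> j \<and> j \<le> Suc i \<and> j \<le> n then (\<Sum>la\<in>hat_parts (Suc i - j) (n - j). F la) else 0)"
proof (cases "2 \<le> j \<and> j \<le> Suc i \<and> j \<le> n")
  case True
  then have "{la. la \<in> hat_parts i n \<and> j \<in># la} = add_mset j ` hat_parts (Suc i - j) (n - j)"
    using hat_parts_with_part by auto
  moreover have "inj_on (add_mset j) (hat_parts (Suc i - j) (n - j))"
    by (simp add: inj_on_def)
  ultimately show ?thesis
    using True by (simp add: sum.reindex)
next
  case False
  then have "{la. la \<in> hat_parts i n \<and> j \<in># la} = {}"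
    using hat_parts_part_bounds by blast
  then show ?thesis
    unfolding if_not_P[OF False] by (simp only: sum.empty)
qed

text \<open>\<open>f c j\<close> stands for the characteristic attached to c equal parts j, such as
h_c[\<ell>_j]; the products and sums below are then the characteristics of Lie_\<lambda> and of
hat-Lie^i_n, respectively of W_\<lambda> and hat-W^i_n.\<close>

definition hat_prod :: "(nat \<Rightarrow> nat \<Rightarrow> symf) \<Rightarrow> nat multiset \<Rightarrow> symf" where
  "hat_prod f la = (\<Prod>j\<in>set_mset la. f (count la j) j)"

definition hat_sum :: "(nat \<Rightarrow> nat \<Rightarrow> symf) \<Rightarrow> nat \<Rightarrow> nat \<Rightarrow> symf" where
  "hat_sum f i n = (\<Sum>la\<in>hat_parts i n. hat_prod f la)"

locale dp1_factors =
  fixes f :: "nat \<Rightarrow> nat \<Rightarrow> symf"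
  assumes f_0: "f 0 j = 1"
    and dp1_f: "dp1 (f (Suc c) (Suc j)) = f c (Suc j) * pw (replicate_mset j 1)"
begin

lemma hat_prod_superset:
  assumes "finite T" "set_mset la \<subseteq> T"
  shows "hat_prod f la = (\<Prod>j\<in>T. f (count la j) j)"
  unfolding hat_prod_def
  by (rule prod.mono_neutral_left) (use assms in \<open>auto simp: f_0 not_in_iff\<close>)

lemma dp1_hat_prod:
  assumes "0 \<notin># la"
  shows "dp1 (hat_prod f la) = (\<Sum>j\<in>set_mset la. hat_prod f (la - {#j#}) * pw (replicate_mset (j - 1) 1))"
  unfolding hat_prod_def dp1_prod[OF finite_set_mset]
proof (rule sum.cong[OF refl])
  fix j
  assume j: "j \<in># la"
  then obtain c where c: "count la j = Suc c"
    by (metis count_eq_zero_iff not0_implies_Suc)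
  obtain j' where j': "j = Suc j'"
    using j assms by (metis not0_implies_Suc)
  have "hat_prod f (la - {#j#}) = (\<Prod>i\<in>set_mset la. f (count (la - {#j#}) i) i)"
    by (rule hat_prod_superset) (auto dest: in_diffD)
  also have "\<dots> = f c j * (\<Prod>i\<in>set_mset la - {j}. f (count la i) i)"
    using j c by (auto simp: prod.remove intro!: prod.cong)
  finally show "dp1 (f (count la j) j) * (\<Prod>i\<in>set_mset la - {j}. f (count la i) i)
      = (\<Prod>i\<in>set_mset (la - {#j#}). f (count (la - {#j#}) i) i) * pw (replicate_mset (j - 1) 1)"
    using dp1_f[of c j'] c j' by (simp add: hat_prod_def ac_simps)
qed

lemma dp1_hat_sum:
  "dp1 (hat_sum f i n) = (\<Sum>j\<le>n. if 2 \<le> j \<and> j \<le> Suc i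
      then hat_sum f (Suc i - j) (n - j) * pw (replicate_mset (j - 1) 1) else 0)"
proof -
  let ?H = "hat_parts i n"
  have "dp1 (hat_sum f i n) = (\<Sum>la\<in>?H. \<Sum>j\<in>{j. j \<in> {..n} \<and> j \<in># la}.
      hat_prod f (la - {#j#}) * pw (replicate_mset (j - 1) 1))"
    unfolding hat_sum_def dp1_sum
  proof (rule sum.cong[OF refl])
    fix la
    assume la: "la \<in> ?H"
    then have "{j. j \<in> {..n} \<and> j \<in># la} = set_mset la"
      using hat_parts_part_bounds by auto
    then show "dp1 (hat_prod f la) = (\<Sum>j\<in>{j. j \<in> {..n} \<and> j \<in># la}.
        hat_prod f (la - {#j#}) * pw (replicate_mset (j - 1) 1))"
      using dp1_hat_prod la by (simp add: hat_parts_iff)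
  qed
  also have "\<dots> = (\<Sum>j\<le>n. \<Sum>la\<in>{la. la \<in> ?H \<and> j \<in># la}.
      hat_prod f (la - {#j#}) * pw (replicate_mset (j - 1) 1))"
    by (rule sum.swap_restrict) (auto simp: finite_hat_parts)
  also have "\<dots> = (\<Sum>j\<le>n. if 2 \<le> j \<and> j \<le> Suc i
      then hat_sum f (Suc i - j) (n - j) * pw (replicate_mset (j - 1) 1) else 0)"
  proof (rule sum.cong[OF refl])
    fix j
    assume "j \<in> {..n}"
    then show "(\<Sum>la\<in>{la. la \<in> ?H \<and> j \<in># la}. hat_prod f (la - {#j#}) * pw (replicate_mset (j - 1) 1))
      = (if 2 \<le> j \<and> j \<le> Suc i
         then hat_sum f (Suc i - j) (n - j) * pw (replicate_mset (j - 1) 1) else 0)"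
      using sum_hat_parts_with_part[where F = "\<lambda>la. hat_prod f la * pw (replicate_mset (j - 1) 1)"
          and i = i and n = n and j = j]
      by (simp add: hat_sum_def sum_distrib_right)
  qed
  finally show ?thesis .
qed

text \<open>In the expansion of the left-hand side, the term of the parts j = 2 gives p_1 S(i, n)
and, after shifting j by one, the remaining terms give p_1 times the expansion of
d/dp_1 S(i, n + 1).\<close>

lemma dp1_hat_sum_Suc_Suc:
  "dp1 (hat_sum f (Suc i) (Suc (Suc n))) = pw {#1#} * (dp1 (hat_sum f i (Suc n)) + hat_sum f i n)"
proof -
  define g where "g j = (if 2 \<le> j \<and> j \<le> Suc (Suc i)
      then hat_sum f (Suc (Suc i) - j) (Suc (Suc n) - j) * pw (replicate_mset (j - 1) 1) else 0)" for j
  define h where "h j = (if 2 \<le> j \<and> j \<le> Suc i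
      then hat_sum f (Suc i - j) (Suc n - j) * pw (replicate_mset (j - 1) 1) else 0)" for j
  have g_Suc: "g (Suc j) = (if j = 1 then pw {#1#} * hat_sum f i n else 0) + pw {#1#} * h j" for j
  proof -
    consider "j = 0" | "j = 1" | j' where "j = Suc j'" "j' \<noteq> 0"
      by (metis One_nat_def not0_implies_Suc)
    then show ?thesis
    proof cases
      case 1
      then show ?thesis
        by (simp add: g_def h_def)
    next
      case 2
      then show ?thesis
        by (simp add: g_def h_def mult.commute)
    next
      case 3
      have "pw (replicate_mset (Suc j') 1) = pw {#1#} * pw (replicate_mset j' 1)"
        by (simp add: pw_mult)
      with 3 show ?thesis
        by (simp add: g_def h_def mult.left_commute)
    qed
  qed
  have "g 0 = 0"
    by (simp add: g_def)
  have "dp1 (hat_sum f (Suc i) (Suc (Suc n))) = (\<Sum>j\<le>Suc (Suc n). g j)"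
    unfolding dp1_hat_sum g_def ..
  also have "\<dots> = g 0 + (\<Sum>j\<le>Suc n. g (Suc j))"
    by (rule sum.atMost_Suc_shift)
  also have "\<dots> = pw {#1#} * hat_sum f i n + pw {#1#} * (\<Sum>j\<le>Suc n. h j)"
    unfolding \<open>g 0 = 0\<close> g_Suc sum.distrib sum_distrib_left by simp
  also have "(\<Sum>j\<le>Suc n. h j) = dp1 (hat_sum f i (Suc n))"
    unfolding dp1_hat_sum h_def ..
  finally show ?thesis
    by (simp add: distrib_left)
qed

lemma res_hat_sum_Suc_Suc:
  "res (Suc (Suc n)) (char_of (Suc (Suc n)) (hat_sum f (Suc i) (Suc (Suc n)))) =
    ind n (\<lambda>\<sigma>. res (Suc n) (char_of (Suc n) (hat_sum f i (Suc n))) \<sigma> + char_of n (hat_sum f i n) \<sigma>)"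
proof -
  have "res (Suc (Suc n)) (char_of (Suc (Suc n)) (hat_sum f (Suc i) (Suc (Suc n))))
      = char_of (Suc n) (pw {#1#} * (dp1 (hat_sum f i (Suc n)) + hat_sum f i n))"
    unfolding res_char_of dp1_hat_sum_Suc_Suc ..
  also have "\<dots> = ind n (char_of n (dp1 (hat_sum f i (Suc n)) + hat_sum f i n))"
    unfolding ind_char_of ..
  also have "char_of n (dp1 (hat_sum f i (Suc n)) + hat_sum f i n) =
      (\<lambda>\<sigma>. res (Suc n) (char_of (Suc n) (hat_sum f i (Suc n))) \<sigma> + char_of n (hat_sum f i n) \<sigma>)"
    unfolding res_char_of by (simp add: char_of_add fun_eq_iff)
  finally show ?thesis .
qed

end

definition lie_factor :: "nat \<Rightarrow> nat \<Rightarrow> symf" where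
  "lie_factor c j = pleth (hsym c) (ell j)"

definition w_factor :: "nat \<Rightarrow> nat \<Rightarrow> symf" where
  "w_factor c j = (if odd j then pleth (hsym c) (piL j) else pleth (esym c) (piL j))"

interpretation lie: dp1_factors lie_factor
  by unfold_locales (simp_all add: lie_factor_def hsym_0 pleth_1 dp1_pleth dp1_hsym dp1_ell)

interpretation w: dp1_factors w_factor
  by unfold_locales (simp_all add: w_factor_def hsym_0 esym_0 pleth_1 dp1_pleth dp1_hsym dp1_esym dp1_piL)

lemma LieHat_eq_hat_sum: "LieHat i m = char_of m (hat_sum lie_factor i m)"
  unfolding LieHat_def hat_sum_def hat_prod_def ch_Lie_def lie_factor_def ..

lemma WHat_eq_hat_sum: "WHat i m = char_of m (hat_sum w_factor i m)"
  unfolding WHat_def hat_sum_def hat_prod_def ch_W_def w_factor_def ..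

theorem theorem1p4:
  fixes n i :: nat
  assumes "n \<ge> 2" and "i \<ge> 1"
  shows "res n (LieHat i n) =
           ind (n - 2) (\<lambda>\<sigma>. res (n - 1) (LieHat (i - 1) (n - 1)) \<sigma> + LieHat (i - 1) (n - 2) \<sigma>)
       \<and> res n (WHat i n) =
           ind (n - 2) (\<lambda>\<sigma>. res (n - 1) (WHat (i - 1) (n - 1)) \<sigma> + WHat (i - 1) (n - 2) \<sigma>)"
proof -
  obtain n' where n: "n = Suc (Suc n')"
    using assms(1) by (metis add_2_eq_Suc le_Suc_ex)
  obtain i' where i: "i = Suc i'"
    using assms(2) by (cases i) auto
  show ?thesis
    unfolding n i LieHat_eq_hat_sum WHat_eq_hat_sum
    using lie.res_hat_sum_Suc_Suc[of n' i'] w.res_hat_sum_Suc_Suc[of n' i'] by simp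
qed

end
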